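(* Let $\mathcal{Q}_d,\mathcal{Q}_e,\mathcal{Q}_{\mathrm{eval}}$ be quantales with operations $\odot_d,\odot_e,\odot_{\mathrm{eval}}$, and let $\phi_d:\mathcal{Q}_d\to\mathcal{Q}_{\mathrm{eval}}$, $\phi_e:\mathcal{Q}_e\to\mathcal{Q}_{\mathrm{eval}}$ be lax functions. Then: (i) (Heterogeneous series) Let $\mathcal{R}$ be a $\mathcal{Q}_d$-category, $\mathcal{F}$ a $\mathcal{Q}_e$-category, and $\mathcal{M}$ a set of objects carrying both a $\mathcal{Q}_d$-category structure and a $\mathcal{Q}_e$-category structure; let $d:\mathcal{R}\nrightarrow_{\mathcal{Q}_d}\mathcal{M}$ be a $\mathcal{Q}_d$-design problem and $e:\mathcal{M}\nrightarrow_{\mathcal{Q}_e}\mathcal{F}$ a $\mathcal{Q}_e$-design problem. Then $(d;e)(r,f):=\bigsqcup_{m\in\mathcal{M}}\phi_d(d(r,m))\odot_{\mathrm{eval}}\phi_e(e(m,f))$ is a $\mathcal{Q}_{\mathrm{eval}}$-design problem $(\phi_d)_\ast\mathcal{R}\nrightarrow(\phi_e)_\ast\mathcal{F}$. (ii) (Heterogeneous parallel) If $d:\mathcal{R}\nrightarrow_{\mathcal{Q}_d}\mathcal{F}$ is a $\mathcal{Q}_d$-design problem and $e:\mathcal{R}'\nrightarrow_{\mathcal{Q}_e}\mathcal{F}'$ is a $\mathcal{Q}_e$-design problem, then $(d\otimes e)((r,r'),(f,f')):=\phi_d(d(r,f))\odot_{\mathrm{eval}}\phi_e(e(r',f'))$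 is a $\mathcal{Q}_{\mathrm{eval}}$-design problem $(\phi_d)_\ast\mathcal{R}\otimes(\phi_e)_\ast\mathcal{R}'\nrightarrow(\phi_d)_\ast\mathcal{F}\otimes(\phi_e)_\ast\mathcal{F}'$. (iii) (Heterogeneous feedback) If $\mathcal{R},\mathcal{F},\mathcal{M}$ are $\mathcal{Q}_d$-categories and $d:\mathcal{R}\otimes\mathcal{M}\nrightarrow_{\mathcal{Q}_d}\mathcal{F}\otimes\mathcal{M}$ is a $\mathcal{Q}_d$-design problem, then $\mathrm{Tr}_{\mathcal{M}}(d)(r,f):=\bigsqcup_{m,m'\in\mathcal{M}}\phi_d(d((r,m),(f,m')))\odot_{\mathrm{eval}}\phi_d(\mathcal{M}(m,m'))$ is a $\mathcal{Q}_{\mathrm{eval}}$-design problem $(\phi_d)_\ast\mathcal{R}\nrightarrow(\phi_d)_\ast\mathcal{F}$.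
   Context: A quantale $(Q,\sqsubseteq,\odot,e)$ is a complete lattice (arbitrary joins $\bigsqcup$) with an associative, commutative operation $\odot$ with unit $e$ distributing over arbitrary joins. A $\mathcal{Q}$-category $\mathcal{C}$ is a set $\mathrm{Ob}(\mathcal{C})$ with values $\mathcal{C}(x,y)\in Q$ such that $e\sqsubseteq\mathcal{C}(x,x)$ and $\mathcal{C}(x,y)\odot\mathcal{C}(y,z)\sqsubseteq\mathcal{C}(x,z)$. The tensor product $\mathcal{C}\otimes\mathcal{D}$ of $\mathcal{Q}$-categories has objects $\mathrm{Ob}(\mathcal{C})\times\mathrm{Ob}(\mathcal{D})$ and values $\mathcal{C}(c,c')\odot\mathcal{D}(d,d')$. A $\mathcal{Q}$-design problem $d:\mathcal{R}\nrightarrow_{\mathcal{Q}}\mathcal{F}$ between $\mathcal{Q}$-categories is a function $d:\mathrm{Ob}(\mathcal{R})\times\mathrm{Ob}(\mathcal{F})\to Q$ with $\mathcal{F}(f^\ast,f)\odot d(r,f)\odot\mathcal{R}(r,r^\ast)\sqsubseteq d(r^\ast,f^\ast)$ for all $f,f^\ast\in\mathcal{F}$, $r,r^\ast\in\mathcal{R}$. A lax function $\phi:(Q,\sqsubseteq,\odot,e)\to(Q',\sqsubseteq',\odot',e')$ is a monotone map with $\phi(q_1)\odot'\phi(q_2)\sqsubseteq'\phi(q_1\odot q_2)$ and $e'\sqsubseteq'\phi(e)$. For a $\mathcal{Q}$-category $\mathcal{C}$ and lax $\phi:\mathcal{Q}\to\mathcal{Q}'$, the pushforward $\phi_\ast\mathcal{C}$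 is the $\mathcal{Q}'$-category with the same objects and values $\phi(\mathcal{C}(x,y))$. *)

theory Defs
  imports Main
begin

definition quantale :: "('q::complete_lattice \<Rightarrow> 'q \<Rightarrow> 'q) \<Rightarrow> 'q \<Rightarrow> bool" where
  "quantale op u \<longleftrightarrow>
     (\<forall>a b c. op (op a b) c = op a (op b c)) \<and>
     (\<forall>a b. op a b = op b a) \<and>
     (\<forall>a. op u a = a) \<and>
     (\<forall>a S. op a (Sup S) = (SUP s\<in>S. op a s))"

definition qcat :: "('q::complete_lattice \<Rightarrow> 'q \<Rightarrow> 'q) \<Rightarrow> 'q \<Rightarrow> 'a set \<Rightarrow> ('a \<Rightarrow> 'a \<Rightarrow> 'q) \<Rightarrow> bool" where
  "qcat op u Ob C \<longleftrightarrow>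
     (\<forall>x\<in>Ob. u \<le> C x x) \<and>
     (\<forall>x\<in>Ob. \<forall>y\<in>Ob. \<forall>z\<in>Ob. op (C x y) (C y z) \<le> C x z)"

definition qtensor :: "('q \<Rightarrow> 'q \<Rightarrow> 'q) \<Rightarrow> ('a \<Rightarrow> 'a \<Rightarrow> 'q) \<Rightarrow> ('b \<Rightarrow> 'b \<Rightarrow> 'q)
    \<Rightarrow> ('a \<times> 'b \<Rightarrow> 'a \<times> 'b \<Rightarrow> 'q)" where
  "qtensor op C D = (\<lambda>(c, d) (c', d'). op (C c c') (D d d'))"

definition pushforward :: "('q \<Rightarrow> 'q') \<Rightarrow> ('a \<Rightarrow> 'a \<Rightarrow> 'q) \<Rightarrow> ('a \<Rightarrow> 'a \<Rightarrow> 'q')" where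
  "pushforward \<phi> C = (\<lambda>x y. \<phi> (C x y))"

definition design_problem ::
  "('q::complete_lattice \<Rightarrow> 'q \<Rightarrow> 'q) \<Rightarrow> 'q \<Rightarrow> 'r set \<Rightarrow> ('r \<Rightarrow> 'r \<Rightarrow> 'q)
    \<Rightarrow> 'f set \<Rightarrow> ('f \<Rightarrow> 'f \<Rightarrow> 'q) \<Rightarrow> ('r \<Rightarrow> 'f \<Rightarrow> 'q) \<Rightarrow> bool" where
  "design_problem op u RO R FO F d \<longleftrightarrow>
     qcat op u RO R \<and> qcat op u FO F \<and>
     (\<forall>f\<in>FO. \<forall>f'\<in>FO. \<forall>r\<in>RO. \<forall>r'\<in>RO. op (op (F f' f) (d r f)) (R r r') \<le> d r' f')"

definition lax_fun ::
  "('q::complete_lattice \<Rightarrow> 'q \<Rightarrow> 'q) \<Rightarrow> 'q \<Rightarrow> ('p::complete_lattice \<Rightarrow> 'p \<Rightarrow> 'p) \<Rightarrow> 'p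
    \<Rightarrow> ('q \<Rightarrow> 'p) \<Rightarrow> bool" where
  "lax_fun op u op' u' \<phi> \<longleftrightarrow>
     mono \<phi> \<and> (\<forall>a b. op' (\<phi> a) (\<phi> b) \<le> \<phi> (op a b)) \<and> u' \<le> \<phi> u"

end

theory Submission
  imports Defs
begin

(* Each heterogeneous construction is reduced to a homogeneous one in the quantale Q_eval.
   A lax function pushes a design problem R -/-> F forward to a design problem between the
   pushforward categories, because laxity lets the three factors of the feasibility inequality
   be collected under one application of the function.  In a single quantale, series
   composition and feedback are joins of design problems, which are again design problems
   since the multiplication distributes over joins; parallel composition is the tensor
   product.  For feedback, laxity only yields phi_*R (x) phi_*M <= phi_*(R (x) M), and this
   suffices because a design problem stays one when its categories are made smaller. *)

lemma quantale_comm_monoid: "quantale op u \<Longrightarrow> comm_monoid op u"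
  unfolding quantale_def by unfold_locales metis+

lemma quantale_SUP_distrib_left:
  "quantale op u \<Longrightarrow> op a (SUP s\<in>S. f s) = (SUP s\<in>S. op a (f s))"
  unfolding quantale_def by (simp add: image_image)

lemma quantale_SUP_distrib_right:
  assumes "quantale op u"
  shows "op (SUP s\<in>S. f s) a = (SUP s\<in>S. op (f s) a)"
proof -
  interpret comm_monoid op u using assms by (rule quantale_comm_monoid)
  show ?thesis using quantale_SUP_distrib_left[OF assms] by (simp add: commute)
qed

lemma quantale_mono:
  assumes q: "quantale op u" and "a \<le> b" and "c \<le> d"
  shows "op a c \<le> op b d"
proof -
  interpret comm_monoid op u using q by (rule quantale_comm_monoid)
  have mono_left: "op x y \<le> op x z" if "y \<le> z" for x y z
  proof -
    have "op x z = op x (Sup {y, z})" using that by (simp add: sup_absorb2)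
    also have "\<dots> = (SUP s\<in>{y, z}. op x s)" using q unfolding quantale_def by blast
    also have "\<dots> = sup (op x y) (op x z)" by simp
    finally show ?thesis by (metis sup.cobounded1)
  qed
  have "op a c \<le> op a d" by (rule mono_left) fact
  also have "\<dots> = op d a" by (rule commute)
  also have "\<dots> \<le> op d b" by (rule mono_left) fact
  finally show ?thesis by (simp add: commute)
qed

lemma lax_funD:
  assumes "lax_fun op u op' u' \<phi>"
  shows "mono \<phi>" and "op' (\<phi> a) (\<phi> b) \<le> \<phi> (op a b)"
  using assms unfolding lax_fun_def by auto

lemma qcat_reflD: "qcat op u Ob C \<Longrightarrow> x \<in> Ob \<Longrightarrow> u \<le> C x x"
  unfolding qcat_def by blast

lemma qcat_pushforward:
  "lax_fun op u op' u' \<phi> \<Longrightarrow> qcat op u Ob C \<Longrightarrow> qcat op' u' Ob (pushforward \<phi> C)"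
  unfolding lax_fun_def qcat_def pushforward_def by (meson monoD order_trans)

lemma qcat_qtensor:
  assumes q: "quantale op u" and C: "qcat op u A C" and D: "qcat op u B D"
  shows "qcat op u (A \<times> B) (qtensor op C D)"
proof -
  interpret comm_monoid op u using q by (rule quantale_comm_monoid)
  have "u \<le> op (C a a) (D b b)" if "a \<in> A" "b \<in> B" for a b
    using quantale_mono[OF q qcat_reflD[OF C] qcat_reflD[OF D]] that by simp
  moreover have "op (op (C a1 a2) (D b1 b2)) (op (C a2 a3) (D b2 b3)) \<le> op (C a1 a3) (D b1 b3)"
    if "a1 \<in> A" "a2 \<in> A" "a3 \<in> A" "b1 \<in> B" "b2 \<in> B" "b3 \<in> B" for a1 a2 a3 b1 b2 b3
  proof -
    have "op (op (C a1 a2) (D b1 b2)) (op (C a2 a3) (D b2 b3))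
        = op (op (C a1 a2) (C a2 a3)) (op (D b1 b2) (D b2 b3))" by (simp add: ac_simps)
    also have "\<dots> \<le> op (C a1 a3) (D b1 b3)"
      using that C D unfolding qcat_def by (intro quantale_mono[OF q]) auto
    finally show ?thesis .
  qed
  ultimately show ?thesis unfolding qcat_def qtensor_def by auto
qed

lemma pushforward_qtensor_le:
  assumes "lax_fun op u op' u' \<phi>"
  shows "qtensor op' (pushforward \<phi> C) (pushforward \<phi> D) x y \<le> pushforward \<phi> (qtensor op C D) x y"
  using lax_funD(2)[OF assms] unfolding qtensor_def pushforward_def by (simp split: prod.splits)

lemma design_problem_resource_le:
  assumes q: "quantale op u" and D: "design_problem op u RO R FO F d"
    and "r \<in> RO" "r' \<in> RO" "f \<in> FO"
  shows "op (d r f) (R r r') \<le> d r' f"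
proof -
  interpret comm_monoid op u using q by (rule quantale_comm_monoid)
  have "u \<le> F f f" using D \<open>f \<in> FO\<close> unfolding design_problem_def qcat_def by blast
  then have "op (op u (d r f)) (R r r') \<le> op (op (F f f) (d r f)) (R r r')"
    by (intro quantale_mono[OF q] order_refl)
  also have "\<dots> \<le> d r' f" using D assms(3-) unfolding design_problem_def by blast
  finally show ?thesis by simp
qed

lemma design_problem_functionality_le:
  assumes q: "quantale op u" and D: "design_problem op u RO R FO F d"
    and "f \<in> FO" "f' \<in> FO" "r \<in> RO"
  shows "op (F f' f) (d r f) \<le> d r f'"
proof -
  interpret comm_monoid op u using q by (rule quantale_comm_monoid)
  have "u \<le> R r r" using D \<open>r \<in> RO\<close> unfolding design_problem_def qcat_def by blast
  then have "op (op (F f' f) (d r f)) u \<le> op (op (F f' f) (d r f)) (R r r)"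
    by (intro quantale_mono[OF q] order_refl)
  also have "\<dots> \<le> d r f'" using D assms(3-) unfolding design_problem_def by blast
  finally show ?thesis by simp
qed

lemma design_problem_pushforward:
  assumes q': "quantale op' u'" and lax: "lax_fun op u op' u' \<phi>"
    and D: "design_problem op u RO R FO F d"
  shows "design_problem op' u' RO (pushforward \<phi> R) FO (pushforward \<phi> F) (\<lambda>r f. \<phi> (d r f))"
  unfolding design_problem_def
proof (intro conjI ballI)
  show "qcat op' u' RO (pushforward \<phi> R)" "qcat op' u' FO (pushforward \<phi> F)"
    using D qcat_pushforward[OF lax] unfolding design_problem_def by auto
  fix f f' r r' assume "f \<in> FO" "f' \<in> FO" "r \<in> RO" "r' \<in> RO"
  have "op' (op' (\<phi> (F f' f)) (\<phi> (d r f))) (\<phi> (R r r'))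
      \<le> op' (\<phi> (op (F f' f) (d r f))) (\<phi> (R r r'))"
    by (intro quantale_mono[OF q'] lax_funD(2)[OF lax] order_refl)
  also have "\<dots> \<le> \<phi> (op (op (F f' f) (d r f)) (R r r'))" by (rule lax_funD(2)[OF lax])
  also have "\<dots> \<le> \<phi> (d r' f')"
    using D \<open>f \<in> FO\<close> \<open>f' \<in> FO\<close> \<open>r \<in> RO\<close> \<open>r' \<in> RO\<close> unfolding design_problem_def
    by (intro monoD[OF lax_funD(1)[OF lax]]) blast
  finally show "op' (op' (pushforward \<phi> F f' f) (\<phi> (d r f))) (pushforward \<phi> R r r') \<le> \<phi> (d r' f')"
    unfolding pushforward_def .
qed

lemma design_problem_antimono:
  assumes q: "quantale op u" and D: "design_problem op u RO R FO F d"
    and R': "qcat op u RO R'" and F': "qcat op u FO F'"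
    and "\<And>r r'. r \<in> RO \<Longrightarrow> r' \<in> RO \<Longrightarrow> R' r r' \<le> R r r'"
    and "\<And>f f'. f \<in> FO \<Longrightarrow> f' \<in> FO \<Longrightarrow> F' f f' \<le> F f f'"
  shows "design_problem op u RO R' FO F' d"
  unfolding design_problem_def
proof (intro conjI ballI R' F')
  fix f f' r r' assume "f \<in> FO" "f' \<in> FO" "r \<in> RO" "r' \<in> RO"
  then have "op (op (F' f' f) (d r f)) (R' r r') \<le> op (op (F f' f) (d r f)) (R r r')"
    using assms(5,6) by (intro quantale_mono[OF q] order_refl)
  also have "\<dots> \<le> d r' f'"
    using D \<open>f \<in> FO\<close> \<open>f' \<in> FO\<close> \<open>r \<in> RO\<close> \<open>r' \<in> RO\<close> unfolding design_problem_def by blast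
  finally show "op (op (F' f' f) (d r f)) (R' r r') \<le> d r' f'" .
qed

lemma design_problem_SUP:
  assumes q: "quantale op u" and R: "qcat op u RO R" and F: "qcat op u FO F"
    and D: "\<And>i. i \<in> I \<Longrightarrow> design_problem op u RO R FO F (D i)"
  shows "design_problem op u RO R FO F (\<lambda>r f. SUP i\<in>I. D i r f)"
  unfolding design_problem_def
proof (intro conjI ballI R F)
  fix f f' r r' assume "f \<in> FO" "f' \<in> FO" "r \<in> RO" "r' \<in> RO"
  then have "op (op (F f' f) (D i r f)) (R r r') \<le> D i r' f'" if "i \<in> I" for i
    using D[OF that] unfolding design_problem_def by blast
  then show "op (op (F f' f) (SUP i\<in>I. D i r f)) (R r r') \<le> (SUP i\<in>I. D i r' f')"
    unfolding quantale_SUP_distrib_left[OF q] quantale_SUP_distrib_right[OF q]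
    by (intro SUP_mono) blast
qed

lemma design_problem_series:
  assumes q: "quantale op u"
    and D: "design_problem op u RO R MO M d" and E: "design_problem op u MO M' FO F e"
  shows "design_problem op u RO R FO F (\<lambda>r f. SUP m\<in>MO. op (d r m) (e m f))"
proof (rule design_problem_SUP[OF q])
  interpret comm_monoid op u using q by (rule quantale_comm_monoid)
  show R: "qcat op u RO R" and F: "qcat op u FO F"
    using D E unfolding design_problem_def by auto
  fix m assume "m \<in> MO"
  show "design_problem op u RO R FO F (\<lambda>r f. op (d r m) (e m f))"
    unfolding design_problem_def
  proof (intro conjI ballI R F)
    fix f f' r r' assume "f \<in> FO" "f' \<in> FO" "r \<in> RO" "r' \<in> RO"
    have "op (op (F f' f) (op (d r m) (e m f))) (R r r')
        = op (op (d r m) (R r r')) (op (F f' f) (e m f))" by (simp add: ac_simps)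
    also have "\<dots> \<le> op (d r' m) (e m f')"
      using \<open>m \<in> MO\<close> \<open>f \<in> FO\<close> \<open>f' \<in> FO\<close> \<open>r \<in> RO\<close> \<open>r' \<in> RO\<close>
      by (intro quantale_mono[OF q] design_problem_resource_le[OF q D]
          design_problem_functionality_le[OF q E])
    finally show "op (op (F f' f) (op (d r m) (e m f))) (R r r') \<le> op (d r' m) (e m f')" .
  qed
qed

lemma design_problem_tensor:
  assumes q: "quantale op u"
    and D: "design_problem op u RO R FO F d" and E: "design_problem op u RO' R' FO' F' e"
  shows "design_problem op u (RO \<times> RO') (qtensor op R R') (FO \<times> FO') (qtensor op F F')
           (\<lambda>(r, r') (f, f'). op (d r f) (e r' f'))"
proof -
  interpret comm_monoid op u using q by (rule quantale_comm_monoid)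
  have "op (op (op (F f1' f1) (F' f2' f2)) (op (d r1 f1) (e r2 f2))) (op (R r1 r1') (R' r2 r2'))
      \<le> op (d r1' f1') (e r2' f2')"
    if "f1 \<in> FO" "f1' \<in> FO" "r1 \<in> RO" "r1' \<in> RO" "f2 \<in> FO'" "f2' \<in> FO'" "r2 \<in> RO'" "r2' \<in> RO'"
    for f1 f1' r1 r1' f2 f2' r2 r2'
  proof -
    have "op (op (op (F f1' f1) (F' f2' f2)) (op (d r1 f1) (e r2 f2))) (op (R r1 r1') (R' r2 r2'))
        = op (op (op (F f1' f1) (d r1 f1)) (R r1 r1')) (op (op (F' f2' f2) (e r2 f2)) (R' r2 r2'))"
      by (simp add: ac_simps)
    also have "\<dots> \<le> op (d r1' f1') (e r2' f2')"
      using D E that unfolding design_problem_def by (intro quantale_mono[OF q]) blast+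
    finally show ?thesis .
  qed
  moreover have "qcat op u (RO \<times> RO') (qtensor op R R')" "qcat op u (FO \<times> FO') (qtensor op F F')"
    using D E unfolding design_problem_def by (auto intro: qcat_qtensor[OF q])
  ultimately show ?thesis unfolding design_problem_def by (auto simp: qtensor_def)
qed

lemma design_problem_slice:
  assumes q: "quantale op u" and M: "qcat op u MO M"
    and D: "design_problem op u (RO \<times> MO) (qtensor op R M) (FO \<times> MO) (qtensor op F M) d"
    and R: "qcat op u RO R" and F: "qcat op u FO F" and "m \<in> MO" "m' \<in> MO"
  shows "design_problem op u RO R FO F (\<lambda>r f. d (r, m) (f, m'))"
  unfolding design_problem_def
proof (intro conjI ballI R F)
  interpret comm_monoid op u using q by (rule quantale_comm_monoid)
  fix f f' r r' assume "f \<in> FO" "f' \<in> FO" "r \<in> RO" "r' \<in> RO"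
  have "op (op (op (F f' f) u) (d (r, m) (f, m'))) (op (R r r') u)
      \<le> op (op (op (F f' f) (M m' m')) (d (r, m) (f, m'))) (op (R r r') (M m m))"
    using qcat_reflD[OF M] \<open>m \<in> MO\<close> \<open>m' \<in> MO\<close> by (intro quantale_mono[OF q] order_refl) blast+
  also have "\<dots> \<le> d (r', m) (f', m')"
    using D \<open>m \<in> MO\<close> \<open>m' \<in> MO\<close> \<open>f \<in> FO\<close> \<open>f' \<in> FO\<close> \<open>r \<in> RO\<close> \<open>r' \<in> RO\<close>
    unfolding design_problem_def qtensor_def by fastforce
  finally show "op (op (F f' f) (d (r, m) (f, m'))) (R r r') \<le> d (r', m) (f', m')" by simp
qed

lemma design_problem_mult_const:
  assumes q: "quantale op u" and D: "design_problem op u RO R FO F d"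
  shows "design_problem op u RO R FO F (\<lambda>r f. op (d r f) c)"
  unfolding design_problem_def
proof (intro conjI ballI)
  interpret comm_monoid op u using q by (rule quantale_comm_monoid)
  show "qcat op u RO R" "qcat op u FO F" using D unfolding design_problem_def by auto
  fix f f' r r' assume "f \<in> FO" "f' \<in> FO" "r \<in> RO" "r' \<in> RO"
  then have "op (op (op (F f' f) (d r f)) (R r r')) c \<le> op (d r' f') c"
    using D unfolding design_problem_def by (intro quantale_mono[OF q] order_refl) blast
  then show "op (op (F f' f) (op (d r f) c)) (R r r') \<le> op (d r' f') c"
    by (simp add: ac_simps)
qed

lemma design_problem_trace:
  assumes q: "quantale op u"
    and R: "qcat op u RO R" and F: "qcat op u FO F" and M: "qcat op u MO M"
    and D: "design_problem op u (RO \<times> MO) (qtensor op R M) (FO \<times> MO) (qtensor op F M) d"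
  shows "design_problem op u RO R FO F
           (\<lambda>r f. SUP p\<in>MO \<times> MO. op (d (r, fst p) (f, snd p)) (M (fst p) (snd p)))"
  using design_problem_slice[OF q M D R F]
  by (intro design_problem_SUP[OF q R F] design_problem_mult_const[OF q]) auto

theorem theorem2:
  fixes opd :: "'qd::complete_lattice \<Rightarrow> 'qd \<Rightarrow> 'qd" and ud :: 'qd
    and ope :: "'qe::complete_lattice \<Rightarrow> 'qe \<Rightarrow> 'qe" and ue :: 'qe
    and opv :: "'qv::complete_lattice \<Rightarrow> 'qv \<Rightarrow> 'qv" and uv :: 'qv
    and \<phi>d :: "'qd \<Rightarrow> 'qv" and \<phi>e :: "'qe \<Rightarrow> 'qv"
  assumes Qd: "quantale opd ud" and Qe: "quantale ope ue" and Qv: "quantale opv uv"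
    and lax_d: "lax_fun opd ud opv uv \<phi>d" and lax_e: "lax_fun ope ue opv uv \<phi>e"
  shows
    \<comment> \<open>(i) heterogeneous series\<close>
    "(\<forall>(RO::'r set) R (FO::'f set) F (MO::'m set) Md Me d e.
        qcat opd ud RO R \<longrightarrow> qcat ope ue FO F \<longrightarrow>
        qcat opd ud MO Md \<longrightarrow> qcat ope ue MO Me \<longrightarrow>
        design_problem opd ud RO R MO Md d \<longrightarrow>
        design_problem ope ue MO Me FO F e \<longrightarrow>
        design_problem opv uv RO (pushforward \<phi>d R) FO (pushforward \<phi>e F)
          (\<lambda>r f. SUP m\<in>MO. opv (\<phi>d (d r m)) (\<phi>e (e m f))))
     \<and>
    \<comment> \<open>(ii) heterogeneous parallel\<close>
     (\<forall>(RO::'r1 set) R (FO::'f1 set) F (RO'::'r2 set) R' (FO'::'f2 set) F' d e.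
        design_problem opd ud RO R FO F d \<longrightarrow>
        design_problem ope ue RO' R' FO' F' e \<longrightarrow>
        design_problem opv uv (RO \<times> RO') (qtensor opv (pushforward \<phi>d R) (pushforward \<phi>e R'))
          (FO \<times> FO') (qtensor opv (pushforward \<phi>d F) (pushforward \<phi>e F'))
          (\<lambda>(r, r') (f, f'). opv (\<phi>d (d r f)) (\<phi>e (e r' f'))))
     \<and>
    \<comment> \<open>(iii) heterogeneous feedback\<close>
     (\<forall>(RO::'r3 set) R (FO::'f3 set) F (MO::'m3 set) M d.
        qcat opd ud RO R \<longrightarrow> qcat opd ud FO F \<longrightarrow> qcat opd ud MO M \<longrightarrow>
        design_problem opd ud (RO \<times> MO) (qtensor opd R M) (FO \<times> MO) (qtensor opd F M) d \<longrightarrow>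
        design_problem opv uv RO (pushforward \<phi>d R) FO (pushforward \<phi>d F)
          (\<lambda>r f. SUP p\<in>MO \<times> MO. opv (\<phi>d (d (r, fst p) (f, snd p))) (\<phi>d (M (fst p) (snd p)))))"
proof (intro conjI allI impI)
  note push_d = design_problem_pushforward[OF Qv lax_d]
    and push_e = design_problem_pushforward[OF Qv lax_e]
  show "design_problem opv uv RO (pushforward \<phi>d R) FO (pushforward \<phi>e F)
          (\<lambda>r f. SUP m\<in>MO. opv (\<phi>d (d r m)) (\<phi>e (e m f)))"
    if "design_problem opd ud RO R MO Md d" "design_problem ope ue MO Me FO F e"
    for R F Md Me d e and RO :: "'r set" and FO :: "'f set" and MO :: "'m set"
    using design_problem_series[OF Qv push_d push_e] that by blast
  show "design_problem opv uv (RO \<times> RO') (qtensor opv (pushforward \<phi>d R) (pushforward \<phi>e R'))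
          (FO \<times> FO') (qtensor opv (pushforward \<phi>d F) (pushforward \<phi>e F'))
          (\<lambda>(r, r') (f, f'). opv (\<phi>d (d r f)) (\<phi>e (e r' f')))"
    if "design_problem opd ud RO R FO F d" "design_problem ope ue RO' R' FO' F' e"
    for R F R' F' d e and RO :: "'r1 set" and FO :: "'f1 set" and RO' :: "'r2 set" and FO' :: "'f2 set"
    using design_problem_tensor[OF Qv push_d push_e] that by blast
  fix R F M d and RO :: "'r3 set" and FO :: "'f3 set" and MO :: "'m3 set"
  assume R: "qcat opd ud RO R" and F: "qcat opd ud FO F" and M: "qcat opd ud MO M"
    and D: "design_problem opd ud (RO \<times> MO) (qtensor opd R M) (FO \<times> MO) (qtensor opd F M) d"
  note cat_v = qcat_pushforward[OF lax_d]
  have "design_problem opv uv (RO \<times> MO) (qtensor opv (pushforward \<phi>d R) (pushforward \<phi>d M))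
          (FO \<times> MO) (qtensor opv (pushforward \<phi>d F) (pushforward \<phi>d M)) (\<lambda>r f. \<phi>d (d r f))"
    by (intro design_problem_antimono[OF Qv push_d[OF D]] qcat_qtensor[OF Qv] cat_v R F M
        pushforward_qtensor_le[OF lax_d])
  from design_problem_trace[OF Qv cat_v[OF R] cat_v[OF F] cat_v[OF M] this]
  show "design_problem opv uv RO (pushforward \<phi>d R) FO (pushforward \<phi>d F)
          (\<lambda>r f. SUP p\<in>MO \<times> MO. opv (\<phi>d (d (r, fst p) (f, snd p))) (\<phi>d (M (fst p) (snd p))))"
    unfolding pushforward_def .
qed

end
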